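(* Let $(P_1,\dots,P_J)$ and $(P^*_1,\dots,P^*_J)$ be two stochastic demand systems for the budget planes $\mathcal{B}_1,\dots,\mathcal{B}_J$ such that $P_j(x)=P^*_j(x)$ for every $j\in\{1,\dots,J\}$ and every patch $x\subseteq \mathcal{B}_j$. Then $(P_1,\dots,P_J)$ is stochastically rationalizable if and only if $(P^*_1,\dots,P^*_J)$ is stochastically rationalizable. In particular, this applies when $(P^*_1,\dots,P^*_J)$ is concentrated on the fixed representatives, i.e. when each $P^*_j$ assigns probability $P_j(x)$ to the representative point $y^*(x)$ of each patch $x\subseteq\mathcal{B}_j$.
   Context: Fix integers $K\ge 1$ (number of goods) and $J\ge 1$, price vectors $p_1,\dots,p_J\in\mathbf{R}^K_{++}$, and budget planes $\mathcal{B}_j=\{y\in\mathbf{R}^K_+: p_j'y=1\}$. A point $x$ is on, strictly above, or strictly below $\mathcal{B}_j$ according as $p_j'x=1$, $p_j'x>1$, or $p_j'x<1$. A (nonstochastic) demand vector is $d=(d_1,\dots,d_J)\in\mathcal{B}_1\times\cdots\times\mathcal{B}_J$; it is rationalizable if there is a utility function $u:\mathbf{R}^K_+\to\mathbf{R}$, strictly increasing ("more is better"), with $d_j\in\arg\max_{x\in\mathcal{B}_j}u(x)$ for every $j$. A stochastic demand system is a tuple $(P_1,\dots,P_J)$ where $P_j$ is a probability distribution on $\mathcal{B}_j$; it is stochastically rationalizable if there is a probability distribution on $\mathcal{B}_1\times\cdots\times\mathcal{B}_J$, concentrated on the set of rationalizable demand vectors, whose $j$-th marginal is $P_j$ for every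 $j$ (equivalently, the $P_j$ are the distributions of demand on $\mathcal{B}_j$ generated by a population distribution over utility functions). Patches: the coarsest partition of $\bigcup_{j}\mathcal{B}_j$ such that each $\mathcal{B}_j$ is a union of cells and each cell is, for every $j$, entirely on, entirely strictly above, or entirely strictly below $\mathcal{B}_j$ (equivalently, two points of $\bigcup_j\mathcal{B}_j$ lie in the same patch iff they have the same vector of signs $(\mathrm{sign}(p_j'x-1))_{j=1}^J$). There are finitely many patches; for each patch $x$ fix, once and for all, a representative point $y^*(x)\in x$. *)

theory Defs
  imports "HOL-Probability.Probability"
begin

text \<open>Goods are indexed by a finite type 'k (K = CARD('k) >= 1), budgets by a finite
  type 'j (J = CARD('j) >= 1). A price system is p :: 'j => real^'k.\<close>

definition nonneg :: "real^'k \<Rightarrow> bool" where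
  "nonneg x \<longleftrightarrow> (\<forall>i. 0 \<le> x $ i)"

definition budget :: "real^'k \<Rightarrow> (real^'k) set" where
  "budget q = {y. nonneg y \<and> q \<bullet> y = 1}"

definition strictly_increasing :: "(real^'k \<Rightarrow> real) \<Rightarrow> bool" where
  "strictly_increasing u \<longleftrightarrow>
     (\<forall>x y. nonneg x \<and> nonneg y \<and> (\<forall>i. x $ i \<le> y $ i) \<and> x \<noteq> y \<longrightarrow> u x < u y)"

definition rationalizable :: "('j \<Rightarrow> real^'k) \<Rightarrow> (real^'k)^'j \<Rightarrow> bool" where
  "rationalizable p d \<longleftrightarrow>
     (\<exists>u. strictly_increasing u \<and>
       (\<forall>j. d $ j \<in> budget (p j) \<and> (\<forall>x \<in> budget (p j). u x \<le> u (d $ j))))"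

definition stoch_demand_system :: "('j \<Rightarrow> real^'k) \<Rightarrow> ('j \<Rightarrow> (real^'k) measure) \<Rightarrow> bool" where
  "stoch_demand_system p P \<longleftrightarrow>
     (\<forall>j. prob_space (P j) \<and> sets (P j) = sets borel \<and> emeasure (P j) (budget (p j)) = 1)"

definition stoch_rationalizable :: "('j::finite \<Rightarrow> real^'k::finite) \<Rightarrow> ('j \<Rightarrow> (real^'k) measure) \<Rightarrow> bool" where
  "stoch_rationalizable p P \<longleftrightarrow>
     (\<exists>Q :: ((real^'k)^'j) measure.
        prob_space Q \<and> sets Q = sets borel \<and>
        (AE d in Q. rationalizable p d) \<and>
        (\<forall>j. distr Q borel (\<lambda>d. d $ j) = P j))"

definition union_budgets :: "('j \<Rightarrow> real^'k) \<Rightarrow> (real^'k) set" where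
  "union_budgets p = (\<Union>j. budget (p j))"

definition is_patch :: "('j \<Rightarrow> real^'k) \<Rightarrow> (real^'k) set \<Rightarrow> bool" where
  "is_patch p x \<longleftrightarrow>
     (\<exists>y \<in> union_budgets p.
        x = {z \<in> union_budgets p. \<forall>j. sgn (p j \<bullet> z - 1) = sgn (p j \<bullet> y - 1)})"

end

theory Submission
  imports Defs
begin

text \<open>
  Whether a demand vector d is rationalizable depends only on the budget planes each d j lies on,
  above or below, i.e. on the patches of its coordinates. Revealed preference turns a rationalizing
  utility into a ranking V of the budgets (d j on plane i forces V j \<le> V i, d j strictly below plane i
  forces V j + 1 \<le> V i), and conversely such a ranking yields the utility x \<mapsto> min over i of a
  piecewise linear function of p i \<bullet> x, which rationalizes every vector with the same sign pattern.

  So let Q rationalize (P j) and resample every coordinate of a Q-draw independently from P* j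
  conditioned on the patch of that coordinate. As P j and P* j agree on patches, the result has
  marginals P* j, and it is still concentrated on rationalizable vectors. In the second claim the
  masses P j x that P* j puts on the representatives sum to one, so P* j x = P j x for every patch x.
\<close>

section \<open>Revealed preference\<close>

lemma inner_nonneg_if_nonneg:
  fixes q x :: "real^'k::finite"
  assumes "\<forall>i. 0 \<le> q $ i" "nonneg x"
  shows "0 \<le> q \<bullet> x"
  using assms unfolding inner_vec_def nonneg_def by (auto intro!: sum_nonneg)

lemma inner_strict_mono_if_pos:
  fixes q x y :: "real^'k::finite"
  assumes "\<forall>i. 0 < q $ i" "\<forall>i. x $ i \<le> y $ i" "x \<noteq> y"
  shows "q \<bullet> x < q \<bullet> y"
proof -
  obtain k where k: "x $ k \<noteq> y $ k" using assms(3) by (metis vec_eq_iff)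
  have "0 < (\<Sum>i\<in>UNIV. q $ i * (y $ i - x $ i))"
    using assms k by (intro sum_pos2[where i=k]) (auto simp: less_le)
  then show ?thesis unfolding inner_vec_def by (simp add: algebra_simps sum_subtractf)
qed

lemma budget_dominates_below:
  fixes q x :: "real^'k::finite"
  assumes "\<forall>i. 0 < q $ i" "nonneg x" "q \<bullet> x < 1"
  obtains y where "y \<in> budget q" "\<forall>i. x $ i \<le> y $ i" "x \<noteq> y"
proof -
  fix k :: 'k
  define c where "c = (1 - q \<bullet> x) / q $ k"
  have qk: "0 < q $ k" using assms by blast
  then have c: "0 < c" using assms(3) by (simp add: c_def)
  define y where "y = x + c *\<^sub>R axis k 1"
  have "q \<bullet> y = 1" using qk by (simp add: y_def c_def inner_add_right inner_axis)
  moreover have "nonneg y" using assms(2) c by (auto simp: nonneg_def y_def axis_def)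
  moreover have "\<forall>i. x $ i \<le> y $ i" "x \<noteq> y" using c by (auto simp: y_def vec_eq_iff axis_def)
  ultimately show ?thesis using that unfolding budget_def by blast
qed

lemma strictly_increasing_inner_comp:
  fixes q :: "real^'k::finite"
  assumes "\<forall>i. 0 < q $ i" and h: "\<And>t s. 0 \<le> t \<Longrightarrow> t < s \<Longrightarrow> h t < h s"
  shows "strictly_increasing (\<lambda>x. h (q \<bullet> x))"
  unfolding strictly_increasing_def
proof (intro allI impI)
  fix x y :: "real^'k" assume xy: "nonneg x \<and> nonneg y \<and> (\<forall>i. x $ i \<le> y $ i) \<and> x \<noteq> y"
  have "0 \<le> q \<bullet> x" using assms(1) xy by (intro inner_nonneg_if_nonneg) (auto intro: less_imp_le)
  moreover have "q \<bullet> x < q \<bullet> y" using assms(1) xy by (intro inner_strict_mono_if_pos) auto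
  ultimately show "h (q \<bullet> x) < h (q \<bullet> y)" by (rule h)
qed

lemma strictly_increasing_Min:
  fixes f :: "'j::finite \<Rightarrow> real^'k::finite \<Rightarrow> real"
  assumes "\<And>j. strictly_increasing (f j)"
  shows "strictly_increasing (\<lambda>x. Min (range (\<lambda>j. f j x)))"
  unfolding strictly_increasing_def
proof (intro allI impI)
  fix x y :: "real^'k" assume xy: "nonneg x \<and> nonneg y \<and> (\<forall>i. x $ i \<le> y $ i) \<and> x \<noteq> y"
  have "Min (range (\<lambda>j. f j y)) \<in> range (\<lambda>j. f j y)" by (rule Min_in) auto
  then obtain j where j: "Min (range (\<lambda>j. f j y)) = f j y" by blast
  have "Min (range (\<lambda>j. f j x)) \<le> f j x" by (simp add: Min_le)
  also have "\<dots> < f j y" using assms[of j] xy unfolding strictly_increasing_def by blast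
  finally show "Min (range (\<lambda>j. f j x)) < Min (range (\<lambda>j. f j y))" using j by simp
qed

definition sign_vector :: "('j \<Rightarrow> real^'k) \<Rightarrow> real^'k \<Rightarrow> 'j \<Rightarrow> real" where
  "sign_vector p x = (\<lambda>j. sgn (p j \<bullet> x - 1))"

lemma rationalizable_ranking:
  fixes p :: "'j::finite \<Rightarrow> real^'k::finite"
  assumes pos: "\<forall>j i. 0 < p j $ i" and "rationalizable p d"
  obtains V :: "'j \<Rightarrow> real" where
    "\<And>i j. p i \<bullet> d $ j = 1 \<Longrightarrow> V j \<le> V i"
    "\<And>i j. p i \<bullet> d $ j < 1 \<Longrightarrow> V j + 1 \<le> V i"
proof -
  obtain u where u: "strictly_increasing u"
    and d: "\<And>j. d $ j \<in> budget (p j)" "\<And>j x. x \<in> budget (p j) \<Longrightarrow> u x \<le> u (d $ j)"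
    using assms(2) unfolding rationalizable_def by blast
  define U where "U j = u (d $ j)" for j
  define V where "V j = real (card {k. U k < U j})" for j
  have "V j \<le> V i" if "p i \<bullet> d $ j = 1" for i j
  proof -
    have "d $ j \<in> budget (p i)" using d(1)[of j] that by (simp add: budget_def)
    then have "U j \<le> U i" using d(2) by (simp add: U_def)
    then show ?thesis unfolding V_def by (auto intro!: card_mono)
  qed
  moreover have "V j + 1 \<le> V i" if below: "p i \<bullet> d $ j < 1" for i j
  proof -
    have "nonneg (d $ j)" using d(1)[of j] by (simp add: budget_def)
    then obtain y where y: "y \<in> budget (p i)" "\<forall>k. d $ j $ k \<le> y $ k" "d $ j \<noteq> y"
      using budget_dominates_below[of "p i" "d $ j"] pos below by blast
    have "u (d $ j) < u y"
      using u y \<open>nonneg (d $ j)\<close> unfolding strictly_increasing_def budget_def by blast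
    then have "U j < U i" using d(2)[OF y(1)] by (simp add: U_def)
    then have "{k. U k < U j} \<subset> {k. U k < U i}" by auto
    then have "card {k. U k < U j} < card {k. U k < U i}" by (intro psubset_card_mono) auto
    then show ?thesis unfolding V_def by simp
  qed
  ultimately show ?thesis using that by blast
qed

lemma rationalizable_of_ranking:
  fixes p :: "'j::finite \<Rightarrow> real^'k::finite" and V :: "'j \<Rightarrow> real"
  assumes pos: "\<forall>j i. 0 < p j $ i" and d: "\<forall>j. d $ j \<in> budget (p j)"
    and on_budget: "\<And>i j. p i \<bullet> d $ j = 1 \<Longrightarrow> V j \<le> V i"
    and below_budget: "\<And>i j. p i \<bullet> d $ j < 1 \<Longrightarrow> V j + 1 \<le> V i"
  shows "rationalizable p d"
proof -
  define B where "B = Max (range V)"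
  have V_le_B: "V j \<le> B" for j unfolding B_def by (rule Max_ge) auto
  define g where "g j t = (if t \<le> 1 then V j + (t - 1) / 2 else B + t)" for j t
  define v where "v x = Min (range (\<lambda>j. g j (p j \<bullet> x)))" for x
  \<comment> \<open>g j equals V j on plane j and loses less than 1/2 below it, which the gap in below_budget
    absorbs; above plane j it exceeds every rank.\<close>
  have "g j t < g j s" if "0 \<le> t" "t < s" for j t s
  proof (cases "s \<le> 1")
    case True
    then show ?thesis using that by (simp add: g_def)
  next
    case False
    then show ?thesis using that V_le_B[of j] by (auto simp: g_def field_simps)
  qed
  then have "strictly_increasing v"
    unfolding v_def using pos by (intro strictly_increasing_Min strictly_increasing_inner_comp) auto
  moreover have "v x \<le> v (d $ i)" if x: "x \<in> budget (p i)" for x i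
  proof -
    have le_g: "V i \<le> g j (p j \<bullet> d $ i)" for j
    proof -
      have "0 \<le> p j \<bullet> d $ i"
        using d pos by (intro inner_nonneg_if_nonneg) (auto simp: budget_def less_imp_le)
      then consider "p j \<bullet> d $ i = 1" | "p j \<bullet> d $ i < 1" | "p j \<bullet> d $ i > 1"
        by linarith
      then show ?thesis
      proof cases
        case 1
        then show ?thesis using on_budget by (simp add: g_def)
      next
        case 2
        then show ?thesis using below_budget[OF 2] \<open>0 \<le> p j \<bullet> d $ i\<close> by (simp add: g_def field_simps)
      next
        case 3
        then show ?thesis using V_le_B[of i] by (simp add: g_def)
      qed
    qed
    have "v x \<le> g i (p i \<bullet> x)" unfolding v_def by (rule Min_le) auto
    also have "\<dots> = V i" using x by (simp add: budget_def g_def)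
    also have "V i \<le> v (d $ i)" unfolding v_def using le_g by (simp add: Min_ge_iff)
    finally show ?thesis .
  qed
  ultimately show ?thesis unfolding rationalizable_def using d by blast
qed

lemma rationalizable_if_same_signs:
  fixes p :: "'j::finite \<Rightarrow> real^'k::finite"
  assumes pos: "\<forall>j i. 0 < p j $ i" and "rationalizable p d"
    and "\<forall>j. d' $ j \<in> budget (p j)"
    and signs: "\<forall>j. sign_vector p (d' $ j) = sign_vector p (d $ j)"
  shows "rationalizable p d'"
proof -
  obtain V :: "'j \<Rightarrow> real" where V: "\<And>i j. p i \<bullet> d $ j = 1 \<Longrightarrow> V j \<le> V i"
    "\<And>i j. p i \<bullet> d $ j < 1 \<Longrightarrow> V j + 1 \<le> V i"
    using rationalizable_ranking[OF pos assms(2)] by blast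
  have sgn_eq: "sgn (p i \<bullet> d' $ j - 1) = sgn (p i \<bullet> d $ j - 1)" for i j
    using signs by (simp add: sign_vector_def fun_eq_iff)
  have same_on: "p i \<bullet> d' $ j = 1 \<longleftrightarrow> p i \<bullet> d $ j = 1" for i j
    using sgn_eq_0_iff[of "p i \<bullet> d' $ j - 1"] sgn_eq_0_iff[of "p i \<bullet> d $ j - 1"] sgn_eq[of i j] by simp
  have same_below: "p i \<bullet> d' $ j < 1 \<longleftrightarrow> p i \<bullet> d $ j < 1" for i j
    using sgn_less[of "p i \<bullet> d' $ j - 1"] sgn_less[of "p i \<bullet> d $ j - 1"] sgn_eq[of i j] by simp
  show ?thesis
    by (rule rationalizable_of_ranking[OF pos assms(3), where V = V]) (simp_all add: same_on same_below V)
qed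

section \<open>Conditioning on a finite measurable partition\<close>

lemma measurable_vec_nth[measurable]:
  "(\<lambda>d::('a::euclidean_space)^'j::finite. d $ j) \<in> borel_measurable borel"
proof -
  have "(\<lambda>d::'a^'j. d $ j \<bullet> u) \<in> borel_measurable borel" for u
    by (simp add: inner_axis[symmetric] borel_measurable_inner)
  then show ?thesis by (subst borel_measurable_euclidean_space) auto
qed

lemma measurable_vec_lambda:
  "(\<lambda>f. vec_lambda f :: ('a::euclidean_space)^'j::finite) \<in> PiM UNIV (\<lambda>_. borel) \<rightarrow>\<^sub>M borel"
proof -
  have "(\<lambda>f. f j \<bullet> u) \<in> borel_measurable (PiM UNIV (\<lambda>_. (borel :: 'a measure)))" for j and u :: 'a
    by measurable
  then show ?thesis
    by (subst borel_measurable_euclidean_space) (auto simp: Basis_vec_def inner_axis)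
qed

lemma measurable_vec_count_space:
  fixes c :: "'a::euclidean_space \<Rightarrow> 'b"
  assumes "finite S" "c \<in> borel \<rightarrow>\<^sub>M count_space S"
  shows "(\<lambda>d::'a^'j::finite. \<lambda>j. c (d $ j)) \<in> borel \<rightarrow>\<^sub>M count_space (Pi UNIV (\<lambda>_. S))"
proof -
  have fin: "finite (Pi UNIV (\<lambda>_::'j. S))"
    using assms(1) by (simp add: PiE_UNIV_domain[symmetric] finite_PiE)
  have "{d::'a^'j. \<forall>j. c (d $ j) = \<sigma> j} \<in> sets borel" for \<sigma>
    using assms(2) by measurable
  moreover have "c x \<in> S" for x using measurable_space[OF assms(2)] by simp
  ultimately show ?thesis
    by (subst measurable_count_space_eq2[OF fin]) (auto simp: vimage_def fun_eq_iff)
qed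

lemma vimage_singleton_in_sets:
  assumes "c \<in> M \<rightarrow>\<^sub>M count_space S"
  shows "c -` {\<tau>} \<inter> space M \<in> sets M"
proof -
  have "c -` {\<tau>} \<inter> space M = c -` ({\<tau>} \<inter> S) \<inter> space M"
    using measurable_space[OF assms] by auto
  then show ?thesis using measurable_sets[OF assms, of "{\<tau>} \<inter> S"] by simp
qed

lemma AE_nonnull_cell:
  assumes "finite S" "c \<in> M \<rightarrow>\<^sub>M count_space S"
  shows "AE x in M. emeasure M (c -` {c x} \<inter> space M) \<noteq> 0"
proof -
  let ?null = "{\<tau>\<in>S. emeasure M (c -` {\<tau>} \<inter> space M) = 0}"
  have "AE x in M. c x \<noteq> \<tau>" if "\<tau> \<in> ?null" for \<tau>
  proof -
    have "AE x in M. x \<notin> c -` {\<tau>} \<inter> space M"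
      using that vimage_singleton_in_sets[OF assms(2)] by (intro AE_not_in null_setsI) auto
    then show ?thesis using AE_space by eventually_elim auto
  qed
  then have "AE x in M. \<forall>\<tau>\<in>?null. c x \<noteq> \<tau>"
    using assms(1) by (intro AE_finite_allI) auto
  then show ?thesis
    using AE_space by eventually_elim (use measurable_space[OF assms(2)] in auto)
qed

lemma nn_integral_finite_partition:
  assumes "finite S" "c \<in> M \<rightarrow>\<^sub>M count_space S"
  shows "(\<integral>\<^sup>+x. f (c x) \<partial>M) = (\<Sum>\<tau>\<in>S. f \<tau> * emeasure M (c -` {\<tau>} \<inter> space M))"
proof -
  note cells = vimage_singleton_in_sets[OF assms(2)]
  have "(\<integral>\<^sup>+x. f (c x) \<partial>M)
      = (\<integral>\<^sup>+x. (\<Sum>\<tau>\<in>S. f \<tau> * indicator (c -` {\<tau>} \<inter> space M) x) \<partial>M)"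
  proof (rule nn_integral_cong)
    fix x assume "x \<in> space M"
    then have "c x \<in> S" using measurable_space[OF assms(2)] by simp
    then show "f (c x) = (\<Sum>\<tau>\<in>S. f \<tau> * indicator (c -` {\<tau>} \<inter> space M) x)"
      using \<open>x \<in> space M\<close> assms(1) by (simp add: indicator_def sum.delta' if_distrib cong: if_cong)
  qed
  also have "\<dots> = (\<Sum>\<tau>\<in>S. f \<tau> * emeasure M (c -` {\<tau>} \<inter> space M))"
    using cells by (subst nn_integral_sum) (auto simp: nn_integral_cmult_indicator)
  finally show ?thesis .
qed

lemma sum_emeasure_finite_partition:
  assumes "finite S" "c \<in> M \<rightarrow>\<^sub>M count_space S" "A \<in> sets M"
  shows "(\<Sum>\<tau>\<in>S. emeasure M (c -` {\<tau>} \<inter> space M \<inter> A)) = emeasure M A"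
proof -
  have "(\<Sum>\<tau>\<in>S. emeasure M (c -` {\<tau>} \<inter> space M \<inter> A))
      = emeasure M (\<Union>\<tau>\<in>S. c -` {\<tau>} \<inter> space M \<inter> A)"
    using assms vimage_singleton_in_sets[OF assms(2)]
    by (intro sum_emeasure) (auto simp: disjoint_family_on_def)
  also have "(\<Union>\<tau>\<in>S. c -` {\<tau>} \<inter> space M \<inter> A) = A"
    using measurable_space[OF assms(2)] sets.sets_into_space[OF assms(3)] by auto
  finally show ?thesis .
qed

lemma sum_measure_finite_partition:
  assumes "finite_measure M" "finite S" "c \<in> M \<rightarrow>\<^sub>M count_space S" "A \<in> sets M"
  shows "(\<Sum>\<tau>\<in>S. measure M (c -` {\<tau>} \<inter> space M \<inter> A)) = measure M A"
proof -
  have "measure M A = enn2real (\<Sum>\<tau>\<in>S. emeasure M (c -` {\<tau>} \<inter> space M \<inter> A))"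
    using sum_emeasure_finite_partition[OF assms(2-4)] by (simp add: measure_def)
  also have "\<dots> = (\<Sum>\<tau>\<in>S. measure M (c -` {\<tau>} \<inter> space M \<inter> A))"
    using finite_measure.emeasure_finite[OF assms(1)]
    by (simp add: enn2real_sum less_top measure_def comp_def)
  finally show ?thesis by simp
qed

text \<open>Conditioning on a null set returns M itself, so that cond_measure M C is always a probability
  measure when M is.\<close>

definition cond_measure :: "'a measure \<Rightarrow> 'a set \<Rightarrow> 'a measure" where
  "cond_measure M C = (if emeasure M C = 0 then M else uniform_measure M C)"

lemma sets_cond_measure[simp, measurable_cong]: "sets (cond_measure M C) = sets M"
  by (simp add: cond_measure_def)

lemma prob_space_cond_measure:
  assumes "prob_space M"
  shows "prob_space (cond_measure M C)"
proof -
  interpret prob_space M by (fact assms)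
  show ?thesis using assms by (auto simp: cond_measure_def intro!: prob_space_uniform_measure)
qed

lemma emeasure_cond_measure_times:
  assumes "finite_measure M" "C \<in> sets M" "A \<in> sets M"
  shows "emeasure (cond_measure M C) A * emeasure M C = emeasure M (C \<inter> A)"
proof (cases "emeasure M C = 0")
  case True
  then show ?thesis
    using emeasure_mono[of "C \<inter> A" C M] assms by (simp add: cond_measure_def)
next
  case False
  moreover have "emeasure M C < \<top>"
    using finite_measure.emeasure_finite[OF assms(1)] by (simp add: less_top)
  ultimately show ?thesis
    using assms by (simp add: cond_measure_def ennreal_divide_times)
qed

lemma AE_cond_measureI:
  assumes "emeasure M C \<noteq> 0" "C \<in> sets M" "AE x in M. x \<in> C \<longrightarrow> P x"
  shows "AE x in cond_measure M C. P x"
  unfolding cond_measure_def using assms(1) AE_uniform_measureI[OF assms(2,3)] by simp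

section \<open>Resampling coordinates within their cells\<close>

definition resample ::
    "('j::finite \<Rightarrow> 'a::euclidean_space measure) \<Rightarrow> ('a \<Rightarrow> 'b) \<Rightarrow> ('j \<Rightarrow> 'b) \<Rightarrow> ('a^'j) measure"
  where "resample M c \<sigma> = distr (PiM UNIV (\<lambda>j. cond_measure (M j) (c -` {\<sigma> j}))) borel vec_lambda"

lemma
  shows sets_resample[simp, measurable_cong]: "sets (resample M c \<sigma>) = sets borel"
    and space_resample[simp]: "space (resample M c \<sigma>) = UNIV"
  by (simp_all add: resample_def)

context
  fixes M :: "'j::finite \<Rightarrow> 'a::euclidean_space measure" and c :: "'a \<Rightarrow> 'b" and S :: "'b set"
  assumes prob_M: "\<And>j. prob_space (M j)" and sets_M: "\<And>j. sets (M j) = sets borel"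
    and finite_S: "finite S" and measurable_c: "c \<in> borel \<rightarrow>\<^sub>M count_space S"
begin

lemma sets_partition_cell: "c -` {\<tau>} \<in> sets borel"
  using vimage_singleton_in_sets[OF measurable_c] by simp

lemma measurable_vec_lambda_cond:
  "vec_lambda \<in> PiM UNIV (\<lambda>j. cond_measure (M j) (C j)) \<rightarrow>\<^sub>M borel"
proof -
  have "sets (PiM UNIV (\<lambda>j. cond_measure (M j) (C j))) = sets (PiM UNIV (\<lambda>_. (borel :: 'a measure)))"
    by (rule sets_PiM_cong) (simp_all add: sets_M)
  then show ?thesis using measurable_vec_lambda by (subst measurable_cong_sets[OF _ refl])
qed

lemma prob_space_resample: "prob_space (resample M c \<sigma>)"
  unfolding resample_def using measurable_vec_lambda_cond
  by (intro prob_space.prob_space_distr prob_space_PiM prob_space_cond_measure prob_M)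

lemma distr_resample_component:
  "distr (resample M c \<sigma>) borel (\<lambda>d. d $ j) = cond_measure (M j) (c -` {\<sigma> j})"
proof -
  let ?\<Pi> = "PiM UNIV (\<lambda>j. cond_measure (M j) (c -` {\<sigma> j}))"
  have "distr (resample M c \<sigma>) borel (\<lambda>d. d $ j) = distr ?\<Pi> borel (\<lambda>\<omega>. \<omega> j)"
    unfolding resample_def using measurable_vec_lambda_cond
    by (subst distr_distr) (simp_all add: comp_def)
  also have "\<dots> = distr ?\<Pi> (cond_measure (M j) (c -` {\<sigma> j})) (\<lambda>\<omega>. \<omega> j)"
    by (rule distr_cong) (simp_all add: sets_M)
  also have "\<dots> = cond_measure (M j) (c -` {\<sigma> j})"
    by (intro distr_PiM_component prob_space_cond_measure prob_M) simp
  finally show ?thesis .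
qed

lemma measurable_resample_kernel:
  "(\<lambda>d::'a^'j. resample M c (\<lambda>j. c (d $ j))) \<in> borel \<rightarrow>\<^sub>M prob_algebra borel"
proof (rule measurable_compose[OF measurable_vec_count_space[OF finite_S measurable_c]])
  show "resample M c \<in> count_space (Pi UNIV (\<lambda>_. S)) \<rightarrow>\<^sub>M prob_algebra borel"
    using prob_space_resample by (auto simp: space_prob_algebra)
qed

lemma AE_resample:
  assumes "\<And>j. emeasure (M j) (c -` {\<sigma> j}) \<noteq> 0"
    and "\<And>j. AE x in M j. x \<in> R j" and "\<And>j. R j \<in> sets borel"
  shows "AE d in resample M c \<sigma>. \<forall>j. d $ j \<in> R j \<and> c (d $ j) = \<sigma> j"
proof -
  have "AE x in M j. x \<in> c -` {\<sigma> j} \<longrightarrow> x \<in> R j \<and> c x = \<sigma> j" for j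
    using assms(2)[of j] by eventually_elim auto
  then have "AE x in cond_measure (M j) (c -` {\<sigma> j}). x \<in> R j \<and> c x = \<sigma> j" for j
    using assms(1) sets_partition_cell by (intro AE_cond_measureI) (simp_all add: sets_M)
  then have "AE \<omega> in PiM UNIV (\<lambda>j. cond_measure (M j) (c -` {\<sigma> j})).
      \<forall>j\<in>UNIV. \<omega> j \<in> R j \<and> c (\<omega> j) = \<sigma> j"
    by (intro AE_finite_allI AE_PiM_component prob_space_cond_measure prob_M) auto
  moreover have "(\<lambda>d::'a^'j. d $ j) -` (R j \<inter> c -` {\<sigma> j}) \<in> sets borel" for j
    using measurable_sets[OF measurable_vec_nth, of "R j \<inter> c -` {\<sigma> j}"] sets_partition_cell assms(3)
    by simp
  then have "(\<Inter>j. (\<lambda>d::'a^'j. d $ j) -` (R j \<inter> c -` {\<sigma> j})) \<in> sets borel"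
    by (intro sets.finite_INT) auto
  then have "{d::'a^'j. \<forall>j. d $ j \<in> R j \<and> c (d $ j) = \<sigma> j} \<in> sets borel"
    by (simp add: vimage_def Int_def Inter_eq)
  ultimately show ?thesis
    unfolding resample_def by (subst AE_distr_iff[OF measurable_vec_lambda_cond]) auto
qed

lemma nn_integral_cond_measure_cell:
  assumes sets_P: "sets P = sets borel"
    and same_cells: "\<And>\<tau>. emeasure P (c -` {\<tau>}) = emeasure (M j) (c -` {\<tau>})"
    and A: "A \<in> sets borel"
  shows "(\<integral>\<^sup>+x. emeasure (cond_measure (M j) (c -` {c x})) A \<partial>P) = emeasure (M j) A"
proof -
  have c_P: "c \<in> P \<rightarrow>\<^sub>M count_space S"
    using measurable_c by (subst measurable_cong_sets[OF sets_P refl])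
  have "(\<integral>\<^sup>+x. emeasure (cond_measure (M j) (c -` {c x})) A \<partial>P)
      = (\<Sum>\<tau>\<in>S. emeasure (cond_measure (M j) (c -` {\<tau>})) A * emeasure (M j) (c -` {\<tau>}))"
    using nn_integral_finite_partition[OF finite_S c_P] same_cells sets_eq_imp_space_eq[OF sets_P]
    by simp
  also have "\<dots> = (\<Sum>\<tau>\<in>S. emeasure (M j) (c -` {\<tau>} \<inter> space (M j) \<inter> A))"
    using A sets_partition_cell prob_M by (simp add: emeasure_cond_measure_times sets_M prob_space_def)
  also have "\<dots> = emeasure (M j) A"
    using A measurable_c
    by (intro sum_emeasure_finite_partition[OF finite_S]) (simp_all add: measurable_cong_sets[OF sets_M refl] sets_M)
  finally show ?thesis .
qed

lemma distr_bind_resample: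
  fixes Q :: "('a^'j) measure" and P :: "'j \<Rightarrow> 'a measure"
  assumes "prob_space Q" "sets Q = sets borel"
    and marginal: "\<And>j. distr Q borel (\<lambda>d. d $ j) = P j"
    and same_cells: "\<And>j \<tau>. emeasure (P j) (c -` {\<tau>}) = emeasure (M j) (c -` {\<tau>})"
  shows "distr (Q \<bind> (\<lambda>d. resample M c (\<lambda>j. c (d $ j)))) borel (\<lambda>d. d $ j) = M j"
proof (rule measure_eqI)
  let ?Q' = "Q \<bind> (\<lambda>d. resample M c (\<lambda>j. c (d $ j)))"
  have Q: "Q \<in> space (prob_algebra borel)" using assms(1,2) by (simp add: space_prob_algebra)
  have sets_Q': "sets ?Q' = sets borel" by (rule sets_bind'[OF Q measurable_resample_kernel])
  show "sets (distr ?Q' borel (\<lambda>d. d $ j)) = sets (M j)" by (simp add: sets_M)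
  fix A assume "A \<in> sets (distr ?Q' borel (\<lambda>d. d $ j))"
  then have A: "A \<in> sets borel" by simp
  define f where "f \<tau> = emeasure (cond_measure (M j) (c -` {\<tau>})) A" for \<tau>
  have "emeasure (distr ?Q' borel (\<lambda>d. d $ j)) A = emeasure ?Q' ((\<lambda>d. d $ j) -` A)"
    using A sets_Q' sets_eq_imp_space_eq[OF sets_Q']
    by (subst emeasure_distr) (auto cong: measurable_cong_sets)
  also have "\<dots> = (\<integral>\<^sup>+d. emeasure (resample M c (\<lambda>j. c (d $ j))) ((\<lambda>d. d $ j) -` A) \<partial>Q)"
    using measurable_sets[OF measurable_vec_nth A]
    by (intro emeasure_bind_prob_algebra[OF Q measurable_resample_kernel]) simp
  also have "\<dots> = (\<integral>\<^sup>+d. f (c (d $ j)) \<partial>Q)"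
  proof (intro nn_integral_cong)
    fix d :: "'a^'j"
    have "emeasure (resample M c (\<lambda>j. c (d $ j))) ((\<lambda>d. d $ j) -` A)
        = emeasure (distr (resample M c (\<lambda>j. c (d $ j))) borel (\<lambda>d. d $ j)) A"
      using A by (simp add: emeasure_distr)
    then show "emeasure (resample M c (\<lambda>j. c (d $ j))) ((\<lambda>d. d $ j) -` A) = f (c (d $ j))"
      by (simp add: distr_resample_component f_def)
  qed
  also have "\<dots> = (\<integral>\<^sup>+x. f (c x) \<partial>P j)"
  proof -
    have "(\<lambda>d. d $ j) \<in> Q \<rightarrow>\<^sub>M borel" using assms(2) by (simp cong: measurable_cong_sets)
    moreover have "(\<lambda>x. f (c x)) \<in> borel_measurable borel"
      using measurable_c by (rule measurable_compose) simp
    ultimately show ?thesis by (simp add: marginal[symmetric] nn_integral_distr)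
  qed
  also have "\<dots> = emeasure (M j) A"
    unfolding f_def using marginal[of j] same_cells A
    by (intro nn_integral_cond_measure_cell) (metis sets_distr)+
  finally show "emeasure (distr ?Q' borel (\<lambda>d. d $ j)) A = emeasure (M j) A" .
qed

end

section \<open>Patches and stochastic rationalizability\<close>

definition sign_vectors :: "('j \<Rightarrow> real) set" where
  "sign_vectors = {\<sigma>. \<forall>j. \<sigma> j \<in> {-1, 0, 1}}"

lemma finite_sign_vectors: "finite (sign_vectors :: ('j::finite \<Rightarrow> real) set)"
proof -
  have "sign_vectors = PiE UNIV (\<lambda>_::'j. {-1, 0, 1 :: real})"
    by (auto simp: sign_vectors_def PiE_UNIV_domain)
  also have "finite \<dots>" by (intro finite_PiE) auto
  finally show ?thesis .
qed

lemma measurable_sign_vector: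
  fixes p :: "'j::finite \<Rightarrow> real^'k::finite"
  shows "sign_vector p \<in> borel \<rightarrow>\<^sub>M count_space sign_vectors"
proof (subst measurable_count_space_eq2[OF finite_sign_vectors], intro conjI ballI)
  show "sign_vector p \<in> space borel \<rightarrow> sign_vectors"
    by (auto simp: sign_vector_def sign_vectors_def sgn_if)
  fix \<sigma> :: "'j \<Rightarrow> real"
  have "sign_vector p -` {\<sigma>} \<inter> space borel = (\<Inter>j. {x. sgn (p j \<bullet> x - 1) = \<sigma> j})"
    by (auto simp: sign_vector_def fun_eq_iff)
  also have "\<dots> \<in> sets borel" by measurable
  finally show "sign_vector p -` {\<sigma>} \<inter> space borel \<in> sets borel" .
qed

lemma sets_budget[measurable]: "budget q \<in> sets (borel :: (real^'k::finite) measure)"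
proof -
  have "budget q = (\<Inter>i. {y. 0 \<le> y $ i}) \<inter> {y. q \<bullet> y = 1}"
    by (auto simp: budget_def nonneg_def)
  also have "\<dots> \<in> sets borel" by measurable
  finally show ?thesis .
qed

lemma patch_in_budget_iff:
  "is_patch p x \<and> x \<subseteq> budget (p j) \<longleftrightarrow>
    (\<exists>\<sigma>. x = sign_vector p -` {\<sigma>} \<inter> budget (p j)) \<and> x \<noteq> {}"
proof -
  have same_sign:
    "sign_vector p z = sign_vector p y \<longleftrightarrow> (\<forall>i. sgn (p i \<bullet> z - 1) = sgn (p i \<bullet> y - 1))" for y z
    by (simp add: sign_vector_def fun_eq_iff)
  have patch_of: "is_patch p x \<longleftrightarrow>
      (\<exists>y \<in> union_budgets p. x = {z \<in> union_budgets p. sign_vector p z = sign_vector p y})"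
    by (simp add: is_patch_def same_sign)
  show ?thesis
  proof
    assume "is_patch p x \<and> x \<subseteq> budget (p j)"
    then obtain y where y: "y \<in> union_budgets p" "x = {z \<in> union_budgets p. sign_vector p z = sign_vector p y}"
      and x: "x \<subseteq> budget (p j)" by (auto simp: patch_of)
    then have "x = sign_vector p -` {sign_vector p y} \<inter> budget (p j)"
      by (auto simp: union_budgets_def)
    then show "(\<exists>\<sigma>. x = sign_vector p -` {\<sigma>} \<inter> budget (p j)) \<and> x \<noteq> {}" using y by auto
  next
    assume "(\<exists>\<sigma>. x = sign_vector p -` {\<sigma>} \<inter> budget (p j)) \<and> x \<noteq> {}"
    then obtain y \<sigma> where x: "x = sign_vector p -` {\<sigma>} \<inter> budget (p j)" and "y \<in> x" by blast
    then have y: "sign_vector p y = \<sigma>" "y \<in> budget (p j)" by auto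
    have "z \<in> budget (p j)" if "z \<in> union_budgets p" "sign_vector p z = sign_vector p y" for z
    proof -
      have "sgn (p j \<bullet> z - 1) = 0" using that(2) y(2) by (simp add: same_sign budget_def)
      then show ?thesis using that(1) by (auto simp: union_budgets_def budget_def sgn_eq_0_iff)
    qed
    then have "x = {z \<in> union_budgets p. sign_vector p z = sign_vector p y}"
      using x y by (auto simp: union_budgets_def)
    moreover have "y \<in> union_budgets p" using y(2) by (auto simp: union_budgets_def)
    ultimately have "is_patch p x" unfolding patch_of by blast
    then show "is_patch p x \<and> x \<subseteq> budget (p j)" using x by blast
  qed
qed

lemma stoch_demand_systemD:
  assumes "stoch_demand_system p P"
  shows "prob_space (P j)" "sets (P j) = sets borel"
  using assms by (simp_all add: stoch_demand_system_def)

lemma measurable_sign_vector_demand: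
  fixes p :: "'j::finite \<Rightarrow> real^'k::finite"
  assumes "stoch_demand_system p M"
  shows "sign_vector p \<in> M j \<rightarrow>\<^sub>M count_space sign_vectors"
  using measurable_sign_vector
  by (subst measurable_cong_sets[OF stoch_demand_systemD(2)[OF assms] refl])

lemma AE_nonnull_sign_cell:
  fixes p :: "'j::finite \<Rightarrow> real^'k::finite"
  assumes "stoch_demand_system p M"
  shows "AE x in M j. emeasure (M j) (sign_vector p -` {sign_vector p x}) \<noteq> 0"
  using AE_nonnull_cell[OF finite_sign_vectors measurable_sign_vector_demand[OF assms]]
    sets_eq_imp_space_eq[OF stoch_demand_systemD(2)[OF assms]]
  by simp

lemma AE_in_budget:
  assumes "stoch_demand_system p P"
  shows "AE x in P j. x \<in> budget (p j)"
proof -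
  interpret prob_space "P j" by (rule stoch_demand_systemD(1)[OF assms])
  show ?thesis
    using assms[unfolded stoch_demand_system_def, rule_format, of j]
    by (intro AE_prob_1) (simp_all add: emeasure_eq_measure)
qed

lemma cell_emeasure_eq_if_patch_measure_eq:
  fixes p :: "'j::finite \<Rightarrow> real^'k::finite"
  assumes P: "stoch_demand_system p P" and Ps: "stoch_demand_system p Ps"
    and patches: "\<forall>j x. is_patch p x \<and> x \<subseteq> budget (p j) \<longrightarrow> measure (P j) x = measure (Ps j) x"
  shows "emeasure (P j) (sign_vector p -` {\<sigma>}) = emeasure (Ps j) (sign_vector p -` {\<sigma>})"
proof -
  let ?X = "sign_vector p -` {\<sigma>} \<inter> budget (p j)"
  have cell: "sign_vector p -` {\<sigma>} \<in> sets borel"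
    using vimage_singleton_in_sets[OF measurable_sign_vector] by simp
  have on_budget: "emeasure (M j) (sign_vector p -` {\<sigma>}) = emeasure (M j) ?X"
    if "stoch_demand_system p M" for M
  proof (rule emeasure_eq_AE)
    show "AE x in M j. x \<in> sign_vector p -` {\<sigma>} \<longleftrightarrow> x \<in> ?X"
      using AE_in_budget[OF that, of j] by eventually_elim auto
  qed (simp_all add: stoch_demand_systemD(2)[OF that] cell sets_budget sets.Int)
  have "measure (P j) ?X = measure (Ps j) ?X"
    using patches patch_in_budget_iff[of p ?X j] by (cases "?X = {}") auto
  then have "emeasure (P j) ?X = emeasure (Ps j) ?X"
    using stoch_demand_systemD(1)[OF P] stoch_demand_systemD(1)[OF Ps]
    by (simp add: finite_measure.emeasure_eq_measure prob_space_def)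
  then show ?thesis using on_budget[OF P] on_budget[OF Ps] by simp
qed

lemma sets_rationalizable:
  fixes p :: "'j::finite \<Rightarrow> real^'k::finite"
  assumes pos: "\<forall>j i. 0 < p j $ i"
  shows "{d. rationalizable p d} \<in> sets borel"
proof -
  define signs where "signs d = (\<lambda>j. sign_vector p (d $ j))" for d :: "(real^'k)^'j"
  define R where "R = signs ` {d. rationalizable p d} \<inter> Pi UNIV (\<lambda>_. sign_vectors)"
  have signs_in: "signs d \<in> Pi UNIV (\<lambda>_. sign_vectors)" for d
    using measurable_space[OF measurable_sign_vector[of p]] by (simp add: signs_def)
  have "rationalizable p d \<longleftrightarrow> (\<forall>j. d $ j \<in> budget (p j)) \<and> signs d \<in> R" for d
  proof
    assume "rationalizable p d"
    then show "(\<forall>j. d $ j \<in> budget (p j)) \<and> signs d \<in> R"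
      using signs_in unfolding R_def rationalizable_def by blast
  next
    assume d: "(\<forall>j. d $ j \<in> budget (p j)) \<and> signs d \<in> R"
    then obtain d0 where "rationalizable p d0" "signs d = signs d0" by (auto simp: R_def)
    then show "rationalizable p d"
      using rationalizable_if_same_signs[OF pos] d by (metis signs_def)
  qed
  then have "{d. rationalizable p d} = {d. \<forall>j. d $ j \<in> budget (p j)} \<inter> signs -` R" by auto
  also have "\<dots> \<in> sets borel"
  proof -
    have "signs -` R \<inter> space borel \<in> sets borel" unfolding signs_def R_def
      by (rule measurable_sets[OF measurable_vec_count_space[OF finite_sign_vectors measurable_sign_vector]]) simp
    moreover have "{d::(real^'k)^'j. \<forall>j. d $ j \<in> budget (p j)} \<in> sets borel" by measurable
    ultimately show ?thesis by simp
  qed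
  finally show ?thesis .
qed

lemma stoch_rationalizable_if_cells_agree:
  fixes p :: "'j::finite \<Rightarrow> real^'k::finite"
  assumes pos: "\<forall>j i. 0 < p j $ i"
    and P: "stoch_demand_system p P" and Ps: "stoch_demand_system p Ps"
    and cells: "\<And>j \<sigma>. emeasure (P j) (sign_vector p -` {\<sigma>}) = emeasure (Ps j) (sign_vector p -` {\<sigma>})"
    and "stoch_rationalizable p P"
  shows "stoch_rationalizable p Ps"
proof -
  obtain Q :: "((real^'k)^'j) measure" where Q: "prob_space Q" "sets Q = sets borel"
    and rat_Q: "AE d in Q. rationalizable p d" and marginal: "\<And>j. distr Q borel (\<lambda>d. d $ j) = P j"
    using assms(5) unfolding stoch_rationalizable_def by blast
  define \<kappa> where "\<kappa> d = resample Ps (sign_vector p) (\<lambda>j. sign_vector p (d $ j))" for d :: "(real^'k)^'j"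
  note partition = stoch_demand_systemD[OF Ps] finite_sign_vectors measurable_sign_vector
  have Q_alg: "Q \<in> space (prob_algebra borel)" using Q by (simp add: space_prob_algebra)
  have \<kappa>: "\<kappa> \<in> borel \<rightarrow>\<^sub>M prob_algebra borel"
    unfolding \<kappa>_def by (rule measurable_resample_kernel[OF partition])
  have "AE d in Q. emeasure (Ps j) (sign_vector p -` {sign_vector p (d $ j)}) \<noteq> 0" for j
  proof -
    have "AE x in distr Q borel (\<lambda>d. d $ j). emeasure (Ps j) (sign_vector p -` {sign_vector p x}) \<noteq> 0"
      using AE_nonnull_sign_cell[OF P] by (subst marginal) (simp add: cells)
    then show ?thesis
      using Q(2) by (intro AE_distrD[of "\<lambda>d. d $ j" Q borel]) (simp_all cong: measurable_cong_sets)
  qed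
  then have "AE d in Q. \<forall>j. emeasure (Ps j) (sign_vector p -` {sign_vector p (d $ j)}) \<noteq> 0"
    by (simp add: AE_all_countable)
  then have "AE d in Q. AE d' in \<kappa> d. rationalizable p d'"
    using rat_Q
  proof eventually_elim
    case (elim d)
    have "AE d' in \<kappa> d. \<forall>j. d' $ j \<in> budget (p j) \<and> sign_vector p (d' $ j) = sign_vector p (d $ j)"
      unfolding \<kappa>_def using elim(1) AE_in_budget[OF Ps] by (intro AE_resample[OF partition]) auto
    then show ?case
      by eventually_elim (use rationalizable_if_same_signs[OF pos elim(2)] in auto)
  qed
  moreover have "\<kappa> \<in> Q \<rightarrow>\<^sub>M subprob_algebra borel"
    using measurable_prob_algebraD[OF \<kappa>] Q(2) by (simp cong: measurable_cong_sets)
  moreover have "Measurable.pred borel (rationalizable p)"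
    using sets_rationalizable[OF pos] by (simp add: pred_def)
  ultimately have "AE d' in Q \<bind> \<kappa>. rationalizable p d'" by (simp add: AE_bind)
  moreover have "distr (Q \<bind> \<kappa>) borel (\<lambda>d. d $ j) = Ps j" for j
    unfolding \<kappa>_def using cells by (intro distr_bind_resample[OF partition Q marginal]) simp
  ultimately show ?thesis
    unfolding stoch_rationalizable_def using prob_space_bind'[OF Q_alg \<kappa>] sets_bind'[OF Q_alg \<kappa>] by blast
qed

lemma sum_measure_sign_cells_budget:
  fixes p :: "'j::finite \<Rightarrow> real^'k::finite"
  assumes M: "stoch_demand_system p M"
  shows "(\<Sum>\<sigma>\<in>sign_vectors. measure (M j) (sign_vector p -` {\<sigma>} \<inter> budget (p j))) = 1"
proof -
  have sets_M: "sets (M j) = sets borel" by (rule stoch_demand_systemD(2)[OF M])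
  from sum_measure_finite_partition[OF _ finite_sign_vectors measurable_sign_vector_demand[OF M, of j],
      where A = "budget (p j)"]
  have "(\<Sum>\<sigma>\<in>sign_vectors. measure (M j) (sign_vector p -` {\<sigma>} \<inter> budget (p j))) = measure (M j) (budget (p j))"
    using stoch_demand_systemD(1)[OF M] sets_eq_imp_space_eq[OF sets_M]
    by (simp add: sets_M prob_space_def)
  also have "\<dots> = 1"
    using M stoch_demand_systemD(1)[OF M] by (simp add: stoch_demand_system_def measure_def)
  finally show ?thesis .
qed

lemma patch_measure_eq_if_representatives:
  fixes p :: "'j::finite \<Rightarrow> real^'k::finite"
  assumes reps: "\<forall>x. is_patch p x \<longrightarrow> ystar x \<in> x"
    and P: "stoch_demand_system p P" and Ps: "stoch_demand_system p Ps"
    and at_reps: "\<forall>j x. is_patch p x \<and> x \<subseteq> budget (p j) \<longrightarrow> measure (Ps j) {ystar x} = measure (P j) x"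
    and x: "is_patch p x" "x \<subseteq> budget (p j)"
  shows "measure (P j) x = measure (Ps j) x"
proof -
  define X where "X \<sigma> = sign_vector p -` {\<sigma>} \<inter> budget (p j)" for \<sigma>
  have sets_X: "X \<sigma> \<in> sets borel" for \<sigma>
    using vimage_singleton_in_sets[OF measurable_sign_vector, of p \<sigma>] by (simp add: X_def sets.Int)
  have le: "measure (P j) (X \<sigma>) \<le> measure (Ps j) (X \<sigma>)" for \<sigma>
  proof (cases "X \<sigma> = {}")
    case False
    then have "is_patch p (X \<sigma>)" "X \<sigma> \<subseteq> budget (p j)"
      using patch_in_budget_iff[of p "X \<sigma>" j] by (auto simp: X_def)
    then have "measure (P j) (X \<sigma>) = measure (Ps j) {ystar (X \<sigma>)}" "ystar (X \<sigma>) \<in> X \<sigma>"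
      using at_reps reps by auto
    then show ?thesis
      using stoch_demand_systemD[OF Ps] sets_X
      by (simp add: finite_measure.finite_measure_mono prob_space_def)
  qed simp
  have "(\<Sum>\<sigma>\<in>sign_vectors. measure (Ps j) (X \<sigma>) - measure (P j) (X \<sigma>)) = 0"
    using sum_measure_sign_cells_budget[OF P, of j] sum_measure_sign_cells_budget[OF Ps, of j]
    by (simp add: X_def sum_subtractf)
  then have eq: "measure (P j) (X \<sigma>) = measure (Ps j) (X \<sigma>)" if "\<sigma> \<in> sign_vectors" for \<sigma>
    using le that finite_sign_vectors by (subst (asm) sum_nonneg_eq_0_iff) auto
  obtain \<sigma> where "x = X \<sigma>" "x \<noteq> {}" using x patch_in_budget_iff[of p x j] by (auto simp: X_def)
  moreover have "\<sigma> \<in> sign_vectors"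
    using calculation measurable_space[OF measurable_sign_vector[of p]] by (auto simp: X_def)
  ultimately show ?thesis using eq by simp
qed

theorem proposition1:
  fixes p :: "'j::finite \<Rightarrow> real^'k::finite"
  assumes "\<forall>j i. 0 < p j $ i"
  shows
    "(\<forall>P Ps. stoch_demand_system p P \<and> stoch_demand_system p Ps \<and>
        (\<forall>j x. is_patch p x \<and> x \<subseteq> budget (p j) \<longrightarrow> measure (P j) x = measure (Ps j) x)
      \<longrightarrow> (stoch_rationalizable p P \<longleftrightarrow> stoch_rationalizable p Ps))
   \<and> (\<forall>ystar P Ps. (\<forall>x. is_patch p x \<longrightarrow> ystar x \<in> x) \<and>
        stoch_demand_system p P \<and> stoch_demand_system p Ps \<and>
        (\<forall>j x. is_patch p x \<and> x \<subseteq> budget (p j) \<longrightarrow> measure (Ps j) {ystar x} = measure (P j) x)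
      \<longrightarrow> (stoch_rationalizable p P \<longleftrightarrow> stoch_rationalizable p Ps))"
proof -
  have transfer: "stoch_rationalizable p P \<longleftrightarrow> stoch_rationalizable p Ps"
    if P: "stoch_demand_system p P" and Ps: "stoch_demand_system p Ps"
      and patches: "\<forall>j x. is_patch p x \<and> x \<subseteq> budget (p j) \<longrightarrow> measure (P j) x = measure (Ps j) x"
    for P Ps
  proof -
    note cells = cell_emeasure_eq_if_patch_measure_eq[OF P Ps patches]
    show ?thesis
      using stoch_rationalizable_if_cells_agree[OF assms P Ps cells]
        stoch_rationalizable_if_cells_agree[OF assms Ps P cells[symmetric]] by blast
  qed
  show ?thesis
  proof (intro conjI allI impI; elim conjE)
    fix P Ps ystar
    assume "stoch_demand_system p P" "stoch_demand_system p Ps"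
      and "\<forall>x. is_patch p x \<longrightarrow> ystar x \<in> x"
      and "\<forall>j x. is_patch p x \<and> x \<subseteq> budget (p j) \<longrightarrow> measure (Ps j) {ystar x} = measure (P j) x"
    then show "stoch_rationalizable p P \<longleftrightarrow> stoch_rationalizable p Ps"
      by (intro transfer allI impI) (auto intro: patch_measure_eq_if_representatives)
  qed (rule transfer)
qed

end
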